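(* Let $n\ge 6$ and let $G$ be a graph on $2n$ vertices with at least $n^2-1$ edges that contains no two distinct vertices of the same degree joined by a path of length three. Let $\beta$ be the largest integer such that $G$ contains two distinct vertices of degree $\beta$, and let $\Delta$ be the maximum degree of $G$. Then either $\beta\ge\Delta-1$ or $\Delta\le n+2$.
   Context: A path of length three joining vertices $a$ and $b$ is a path $a\,x\,y\,b$ with four distinct vertices and three edges. Graphs are finite and simple. *)

theory Defs
  imports Main
begin

definition simple_graph :: "'a set \<Rightarrow> ('a \<Rightarrow> 'a \<Rightarrow> bool) \<Rightarrow> bool" where
  "simple_graph V E \<longleftrightarrow> finite V \<and>
     (\<forall>u v. E u v \<longrightarrow> u \<in> V \<and> v \<in> V \<and> u \<noteq> v \<and> E v u)"

definition num_edges :: "'a set \<Rightarrow> ('a \<Rightarrow> 'a \<Rightarrow> bool) \<Rightarrow> nat" where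
  "num_edges V E = card {{u, v} | u v. u \<in> V \<and> v \<in> V \<and> E u v}"

definition degree :: "'a set \<Rightarrow> ('a \<Rightarrow> 'a \<Rightarrow> bool) \<Rightarrow> 'a \<Rightarrow> nat" where
  "degree V E u = card {v \<in> V. E u v}"

definition max_degree :: "'a set \<Rightarrow> ('a \<Rightarrow> 'a \<Rightarrow> bool) \<Rightarrow> nat" where
  "max_degree V E = Max (degree V E ` V)"

definition beta :: "'a set \<Rightarrow> ('a \<Rightarrow> 'a \<Rightarrow> bool) \<Rightarrow> nat" where
  "beta V E = Max {d. \<exists>u\<in>V. \<exists>v\<in>V. u \<noteq> v \<and> degree V E u = d \<and> degree V E v = d}"

definition path3 :: "('a \<Rightarrow> 'a \<Rightarrow> bool) \<Rightarrow> 'a \<Rightarrow> 'a \<Rightarrow> bool" where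
  "path3 E a b \<longleftrightarrow> (\<exists>x y. distinct [a, x, y, b] \<and> E a x \<and> E x y \<and> E y b)"

end

theory Submission
  imports Defs
begin

text \<open>Suppose \<open>\<beta> \<le> \<Delta> - 2\<close> and let \<open>v\<close> have degree \<open>\<Delta>\<close>. A neighbour \<open>a\<close> of \<open>v\<close> whose
  degree is shared by another neighbour \<open>c\<close> has no neighbour in \<open>N(v) - {c}\<close> (it would start a path
  \<open>a y v c\<close>), so \<open>deg a \<le> min \<beta> (|V| + 1 - \<Delta>)\<close>. The other neighbours of \<open>v\<close>, together with
  the non-neighbours of degree above \<open>\<beta>\<close>, have pairwise distinct degrees in \<open>{1..\<Delta>-1}\<close>, and
  the remaining non-neighbours have degree at most \<open>\<beta>\<close>. Adding up these bounds gives
  \<open>4 e \<le> |V|\<^sup>2 - |V| + 6\<close> whatever \<open>\<Delta>\<close> is, which contradicts \<open>e \<ge> n\<^sup>2 - 1\<close> for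
  \<open>|V| = 2 n\<close>, \<open>n \<ge> 6\<close>.\<close>

lemma degree_sum_eq_twice_num_edges:
  assumes "simple_graph V E"
  shows "(\<Sum>x\<in>V. degree V E x) = 2 * num_edges V E"
proof -
  define Ed where "Ed = {{u, w} | u w. u \<in> V \<and> w \<in> V \<and> E u w}"
  have fin: "finite V" and sym: "\<And>u w. E u w \<Longrightarrow> u \<in> V \<and> w \<in> V \<and> u \<noteq> w \<and> E w u"
    using assms by (auto simp: simple_graph_def)
  have "Ed \<subseteq> Pow V"
    unfolding Ed_def by auto
  then have fin_Ed: "finite Ed"
    using fin by (meson finite_Pow_iff finite_subset)
  have "degree V E x = card {e\<in>Ed. x \<in> e}" for x
  proof -
    have "bij_betw (\<lambda>y. {x, y}) {y\<in>V. E x y} {e\<in>Ed. x \<in> e}"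
    proof (rule bij_betw_imageI)
      show "inj_on (\<lambda>y. {x, y}) {y\<in>V. E x y}"
        by (auto intro!: inj_onI simp: doubleton_eq_iff)
      show "(\<lambda>y. {x, y}) ` {y\<in>V. E x y} = {e\<in>Ed. x \<in> e}"
        unfolding Ed_def using sym by auto
    qed
    then show ?thesis
      unfolding degree_def by (rule bij_betw_same_card)
  qed
  moreover have "\<forall>e\<in>Ed. card {x\<in>V. x \<in> e} = 2"
    unfolding Ed_def using sym by (auto simp: Int_absorb1 [symmetric] Collect_conj_eq card_insert_if)
  ultimately show ?thesis
    using sum_multicount [OF fin fin_Ed, of "(\<in>)" 2] unfolding num_edges_def Ed_def by simp
qed

lemma card_mult_Suc_card_le_twice_sum:
  fixes A :: "nat set"
  assumes "finite A" "0 \<notin> A"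
  shows "card A * (card A + 1) \<le> 2 * \<Sum>A"
  using assms
proof (induction "card A" arbitrary: A)
  case 0
  then show ?case by simp
next
  case (Suc k)
  define M where "M = Max A"
  have "A \<noteq> {}"
    using Suc.hyps(2) by auto
  then have M_in: "M \<in> A" and "A \<subseteq> {1..M}"
    using Suc.prems by (auto simp: M_def Suc_le_eq intro!: gr0I)
  then have "card A \<le> M"
    using card_mono [of "{1..M}" A] by simp
  moreover have "k * (k + 1) \<le> 2 * \<Sum>(A - {M})"
    using Suc.hyps Suc.prems M_in by (metis card_Diff_singleton diff_Suc_1 finite_Diff DiffD1)
  moreover have "\<Sum>A = M + \<Sum>(A - {M})"
    using Suc.prems(1) M_in by (simp add: sum.remove)
  ultimately show ?case
    using Suc.hyps(2) [symmetric] by (simp add: algebra_simps)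
qed

lemma sum_inj_on_atLeastAtMost_le:
  fixes f :: "'a \<Rightarrow> nat"
  assumes inj: "inj_on f X" and range: "f ` X \<subseteq> {1..M}"
  shows "2 * sum f X + (M - card X) * (M - card X + 1) \<le> M * (M + 1)"
proof -
  define C where "C = {1..M} - f ` X"
  have "card C = M - card X"
    using range card_image [OF inj] by (simp add: C_def card_Diff_subset finite_subset)
  moreover have "card C * (card C + 1) \<le> 2 * \<Sum>C"
    by (rule card_mult_Suc_card_le_twice_sum) (auto simp: C_def)
  ultimately have "(M - card X) * (M - card X + 1) \<le> 2 * \<Sum>C"
    by simp
  moreover have "sum f X + \<Sum>C = \<Sum>{1..M}"
    using range sum.subset_diff [of "f ` X" "{1..M}" id] sum.reindex [OF inj, of id]
    by (simp add: C_def)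
  moreover have "2 * \<Sum>{1..M} = M * (M + 1)"
    using gauss_sum_nat [of M] by (simp add: sum.atLeast_Suc_atMost atLeast0AtMost [symmetric])
  ultimately show ?thesis
    by linarith
qed

lemma degree_count_inequality:
  fixes N D b m r k l t SR SX SW :: int
  assumes SR: "SR \<le> r * m" and m: "0 \<le> m" "m \<le> b" "m \<le> N + 1 - D"
    and SX: "2 * SX + t * (t + 1) \<le> (D - 1) * D" and t: "t + k + 1 = D"
    and SW: "SW \<le> l * b" and l: "0 \<le> l" "l \<le> N - 1 - D"
    and partition: "r + k + l + 1 = N"
    and b: "b + 2 \<le> D"
  shows "2 * (D + SR + SX + SW) \<le> N^2 - N + 6"
proof -
  define j where "j = N - 1 - D - l"
  have r: "r = t + 1 + j"
    using partition t by (simp add: j_def)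
  have "0 \<le> (m - t) * (m - t - 1)"
    by (cases "m - t \<ge> 1") (simp_all add: mult_nonpos_nonpos)
  then have "2 * (r * m) - t * (t + 1) \<le> m * (m + 1) + 2 * (j * m)"
    unfolding r by (simp add: algebra_simps)
  moreover have "j * m \<le> j * b"
    using l m by (simp add: mult_left_mono j_def)
  moreover have "m * (m + 1) \<le> (N + 1 - D) * (N + 2 - D)"
    using m by (intro mult_mono) auto
  moreover have "(N - 1 - D) * b \<le> (N - 1 - D) * (D - 2)"
    using l b by (intro mult_left_mono) auto
  ultimately have "2 * (D + SR + SX + SW)
      \<le> 2 * D + (N + 1 - D) * (N + 2 - D) + (D - 1) * D + 2 * ((N - 1 - D) * (D - 2))"
    using SR SX SW by (simp add: algebra_simps j_def)
  also have "\<dots> = N^2 - N + 6"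
    by (simp add: algebra_simps power2_eq_square)
  finally show ?thesis .
qed

lemma degree_le_max_degree:
  assumes "simple_graph V E" "x \<in> V"
  shows "degree V E x \<le> max_degree V E"
  unfolding max_degree_def using assms by (intro Max_ge) (auto simp: simple_graph_def)

lemma max_degree_attained:
  assumes "simple_graph V E" "V \<noteq> {}"
  obtains v where "v \<in> V" "degree V E v = max_degree V E"
proof -
  have "max_degree V E \<in> degree V E ` V"
    using assms unfolding max_degree_def simple_graph_def by (intro Max_in) auto
  then show ?thesis
    using that by auto
qed

lemma degree_le_beta:
  assumes "simple_graph V E" "x \<in> V" "y \<in> V" "x \<noteq> y" "degree V E x = degree V E y"
  shows "degree V E x \<le> beta V E"
proof -
  let ?S = "{d. \<exists>u\<in>V. \<exists>w\<in>V. u \<noteq> w \<and> degree V E u = d \<and> degree V E w = d}"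
  have "?S \<subseteq> degree V E ` V"
    by auto
  then have "finite ?S"
    using assms(1) unfolding simple_graph_def by (meson finite_imageI finite_subset)
  moreover have "degree V E x \<in> ?S"
    using assms(2-5) by auto
  ultimately show ?thesis
    unfolding beta_def by simp
qed

lemma degree_add_degree_le_if_not_path3:
  assumes graph: "simple_graph V E" and "E v a" "E v c" "a \<noteq> c" and "\<not> path3 E a c"
  shows "degree V E a + degree V E v \<le> card V + 1"
proof -
  have fin: "finite V" and sym: "\<And>x y. E x y \<Longrightarrow> x \<in> V \<and> y \<in> V \<and> x \<noteq> y \<and> E y x"
    using graph by (auto simp: simple_graph_def)
  define Nv where "Nv = {y\<in>V. E v y}"
  have card_closed_nbhd: "card (insert v Nv) = degree V E v + 1"
    using fin sym [of v v] by (subst card_insert_disjoint) (auto simp: Nv_def degree_def)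
  have closed_nbhd_subset: "insert v Nv \<subseteq> V"
    using assms(2) sym by (auto simp: Nv_def)
  have "{y\<in>V. E a y} \<subseteq> {v, c} \<union> (V - insert v Nv)"
  proof
    fix y assume y: "y \<in> {y\<in>V. E a y}"
    have "y \<notin> Nv" if "y \<noteq> v" "y \<noteq> c"
    proof
      assume "y \<in> Nv"
      then have "distinct [a, y, v, c] \<and> E a y \<and> E y v \<and> E v c"
        using assms sym y that unfolding Nv_def by auto
      then show False
        using assms(5) unfolding path3_def by blast
    qed
    then show "y \<in> {v, c} \<union> (V - insert v Nv)"
      using y by auto
  qed
  then have "degree V E a \<le> card ({v, c} \<union> (V - insert v Nv))"
    unfolding degree_def using fin by (intro card_mono) auto
  also have "\<dots> \<le> card {v, c} + card (V - insert v Nv)"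
    by (rule card_Un_le)
  also have "\<dots> \<le> 2 + (card V - (degree V E v + 1))"
  proof -
    have "card {v, c} \<le> 2"
      by (simp add: card_insert_if)
    moreover have "card (V - insert v Nv) = card V - (degree V E v + 1)"
      using card_Diff_subset [OF finite_subset [OF closed_nbhd_subset fin] closed_nbhd_subset]
      by (simp only: card_closed_nbhd)
    ultimately show ?thesis
      by linarith
  qed
  finally show ?thesis
    using card_mono [OF fin closed_nbhd_subset] unfolding card_closed_nbhd by linarith
qed

locale degree_gap =
  fixes V :: "'a set" and E :: "'a \<Rightarrow> 'a \<Rightarrow> bool" and b :: nat and v :: 'a
  assumes graph: "simple_graph V E"
    and no_path3: "\<And>x y. \<lbrakk>x \<in> V; y \<in> V; x \<noteq> y; degree V E x = degree V E y\<rbrakk> \<Longrightarrow> \<not> path3 E x y"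
    and repeated_degree_le:
      "\<And>x y. \<lbrakk>x \<in> V; y \<in> V; x \<noteq> y; degree V E x = degree V E y\<rbrakk> \<Longrightarrow> degree V E x \<le> b"
    and v_in: "v \<in> V"
    and degree_v: "degree V E v = max_degree V E"
    and gap: "b + 2 \<le> max_degree V E"
begin

abbreviation deg :: "'a \<Rightarrow> nat" where
  "deg \<equiv> degree V E"

abbreviation \<Delta> :: nat where
  "\<Delta> \<equiv> max_degree V E"

definition nbrs :: "'a set" where
  "nbrs = {y\<in>V. E v y}"

definition far :: "'a set" where
  "far = V - insert v nbrs"

definition twins :: "'a set" where
  "twins = {a\<in>nbrs. \<exists>c\<in>nbrs. c \<noteq> a \<and> deg c = deg a}"

definition spread :: "'a set" where
  "spread = (nbrs - twins) \<union> {x\<in>far. b < deg x}"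

definition far_low :: "'a set" where
  "far_low = {x\<in>far. deg x \<le> b}"

lemma finite_V: "finite V"
  using graph by (simp add: simple_graph_def)

lemma edge_sym: "E x y \<Longrightarrow> x \<in> V \<and> y \<in> V \<and> x \<noteq> y \<and> E y x"
  using graph by (simp add: simple_graph_def)

lemma card_far: "card far + \<Delta> + 1 = card V"
proof -
  have card_closed: "card (insert v nbrs) = \<Delta> + 1"
    using finite_V edge_sym [of v v] degree_v
    by (subst card_insert_disjoint) (auto simp: nbrs_def degree_def)
  have closed_subset: "insert v nbrs \<subseteq> V"
    using v_in by (auto simp: nbrs_def)
  show ?thesis
    using card_Diff_subset [OF finite_subset [OF closed_subset finite_V] closed_subset]
      card_mono [OF finite_V closed_subset]
    unfolding far_def card_closed by simp
qed

lemma twin_degree_le: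
  assumes "a \<in> twins"
  shows "deg a \<le> b" and "deg a + \<Delta> \<le> card V + 1"
proof -
  obtain c where c: "c \<in> nbrs" "c \<noteq> a" "deg c = deg a" and a: "a \<in> nbrs"
    using assms by (auto simp: twins_def)
  then have "a \<in> V" "c \<in> V" "E v a" "E v c"
    by (auto simp: nbrs_def)
  then show "deg a \<le> b" and "deg a + \<Delta> \<le> card V + 1"
    using c repeated_degree_le no_path3 degree_add_degree_le_if_not_path3 [OF graph] degree_v
    by metis+
qed

lemma inj_on_degree_spread: "inj_on deg spread"
proof
  fix x y assume xy: "x \<in> spread" "y \<in> spread" "deg x = deg y"
  show "x = y"
  proof (rule ccontr)
    assume "x \<noteq> y"
    moreover have "x \<in> V" "y \<in> V"
      using xy by (auto simp: spread_def nbrs_def far_def)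
    ultimately have "deg x \<le> b"
      using xy repeated_degree_le by blast
    then have "x \<in> nbrs - twins" "y \<in> nbrs - twins"
      using xy by (auto simp: spread_def)
    then show False
      using \<open>x \<noteq> y\<close> xy by (auto simp: twins_def)
  qed
qed

lemma degree_spread_subset: "deg ` spread \<subseteq> {1..\<Delta> - 1}"
proof
  fix d assume "d \<in> deg ` spread"
  then obtain x where x: "x \<in> spread" "d = deg x"
    by auto
  have "x \<in> V" "x \<noteq> v"
    using x edge_sym by (auto simp: spread_def nbrs_def far_def)
  then have "deg x \<le> \<Delta>" and "deg x \<noteq> \<Delta>"
    using degree_le_max_degree [OF graph] repeated_degree_le [of x v] v_in degree_v gap by auto
  moreover have "deg x \<noteq> 0"
  proof (cases "x \<in> nbrs")
    case True
    then have "v \<in> {y\<in>V. E x y}"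
      using v_in edge_sym by (auto simp: nbrs_def)
    then show ?thesis
      using finite_V by (auto simp: degree_def)
  next
    case False
    then show ?thesis
      using x by (auto simp: spread_def)
  qed
  ultimately show "d \<in> {1..\<Delta> - 1}"
    using x by auto
qed

lemma sum_vertices: "sum g V = g v + sum g twins + sum g spread + sum g far_low"
proof -
  have nbrs: "nbrs \<subseteq> V" "v \<notin> nbrs" and twins: "twins \<subseteq> nbrs"
    using edge_sym by (auto simp: nbrs_def twins_def)
  then have V_eq: "V = insert v (twins \<union> spread \<union> far_low)"
    using v_in unfolding spread_def far_low_def far_def by auto
  have "v \<notin> twins \<union> spread \<union> far_low"
    and "twins \<inter> spread = {}" "(twins \<union> spread) \<inter> far_low = {}"
    using nbrs twins unfolding spread_def far_low_def far_def by auto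
  moreover have "finite twins" "finite spread" "finite far_low"
    using finite_V finite_subset [OF nbrs(1) finite_V] finite_subset [OF twins]
    unfolding spread_def far_low_def far_def by auto
  ultimately have "sum g (insert v (twins \<union> spread \<union> far_low))
      = g v + sum g twins + sum g spread + sum g far_low"
    by (simp add: sum.union_disjoint add.assoc)
  with V_eq show ?thesis
    by metis
qed

lemma sum_degree_spread_le:
  obtains t where "t + card spread + 1 = \<Delta>"
    and "2 * int (sum deg spread) + int t * (int t + 1) \<le> (int \<Delta> - 1) * int \<Delta>"
proof -
  define t where "t = \<Delta> - 1 - card spread"
  have "card spread \<le> \<Delta> - 1"
    using card_mono [OF _ degree_spread_subset] card_image [OF inj_on_degree_spread] by simp
  then have "t + card spread + 1 = \<Delta>"
    using gap by (simp add: t_def)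
  moreover have "int (2 * sum deg spread + t * (t + 1)) \<le> int ((\<Delta> - 1) * (\<Delta> - 1 + 1))"
    using sum_inj_on_atLeastAtMost_le [OF inj_on_degree_spread degree_spread_subset]
    unfolding t_def by (simp only: of_nat_le_iff)
  then have "2 * int (sum deg spread) + int t * (int t + 1) \<le> (int \<Delta> - 1) * int \<Delta>"
    using gap by (simp add: of_nat_diff algebra_simps)
  ultimately show ?thesis
    using that by blast
qed

lemma four_num_edges_le: "4 * num_edges V E + card V \<le> card V ^ 2 + 6"
proof -
  define m where "m = min b (card V + 1 - \<Delta>)"
  obtain t where t: "t + card spread + 1 = \<Delta>"
    and spread: "2 * int (sum deg spread) + int t * (int t + 1) \<le> (int \<Delta> - 1) * int \<Delta>"
    by (rule sum_degree_spread_le)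
  have "sum deg twins \<le> card twins * m"
    using sum_bounded_above [of twins deg m] twin_degree_le unfolding m_def by fastforce
  then have twins: "int (sum deg twins) \<le> int (card twins) * int m"
    by (metis of_nat_le_iff of_nat_mult)
  have "sum deg far_low \<le> card far_low * b"
    using sum_bounded_above [of far_low deg b] by (auto simp: far_low_def)
  then have far_low: "int (sum deg far_low) \<le> int (card far_low) * int b"
    by (metis of_nat_le_iff of_nat_mult)
  have "card far_low \<le> card far"
    using finite_V by (intro card_mono) (auto simp: far_low_def far_def)
  moreover have "card twins + card spread + card far_low + 1 = card V"
    using sum_vertices [of "\<lambda>_. 1 :: nat"] by simp
  ultimately have "2 * (int \<Delta> + int (sum deg twins) + int (sum deg spread) + int (sum deg far_low))
      \<le> int (card V) ^ 2 - int (card V) + 6"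
    using card_far gap t
    by (intro degree_count_inequality [OF twins _ _ _ spread _ far_low, where k = "int (card spread)"])
      (simp_all add: m_def)
  moreover have "int (2 * num_edges V E)
      = int \<Delta> + int (sum deg twins) + int (sum deg spread) + int (sum deg far_low)"
    using degree_sum_eq_twice_num_edges [OF graph] sum_vertices [of deg] degree_v
    by (simp only: of_nat_add [symmetric])
  ultimately have "int (4 * num_edges V E + card V) \<le> int (card V ^ 2 + 6)"
    by simp
  then show ?thesis
    by (simp only: of_nat_le_iff)
qed

end

theorem lemma3p3:
  fixes V :: "'a set" and E :: "'a \<Rightarrow> 'a \<Rightarrow> bool" and n :: nat
  assumes "simple_graph V E"
    and "n \<ge> 6"
    and "card V = 2 * n"
    and "num_edges V E \<ge> n ^ 2 - 1"
    and "\<forall>a\<in>V. \<forall>b\<in>V. a \<noteq> b \<and> degree V E a = degree V E b \<longrightarrow> \<not> path3 E a b"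
  shows "beta V E \<ge> max_degree V E - 1 \<or> max_degree V E \<le> n + 2"
proof (rule ccontr)
  assume "\<not> ?thesis"
  then have gap: "beta V E + 2 \<le> max_degree V E"
    by linarith
  have "V \<noteq> {}"
    using assms(2,3) by auto
  then obtain v where "v \<in> V" "degree V E v = max_degree V E"
    using max_degree_attained [OF assms(1)] by blast
  then interpret degree_gap V E "beta V E" v
    using assms(1,5) degree_le_beta [OF assms(1)] gap by unfold_locales blast+
  have "4 * num_edges V E + 2 * n \<le> 4 * n ^ 2 + 6"
    using four_num_edges_le assms(3) by (simp add: power_mult_distrib)
  moreover have "n ^ 2 \<le> num_edges V E + 1"
    using assms(4) by linarith
  ultimately show False
    using assms(2) by linarith
qed

end
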